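(* Let $G$ be a group and let $H_1, H_2, \ldots, H_n$ be the successive vertices of a path $\gamma$ in $\mathcal{C}(G)$. If $H_i \subseteq H_{i+1}$ for all $i$, then $\gamma$ is a geodesic.
   Context: For subgroups $A,B$ of $G$, $c(A,B) = [A:A\cap B][B:A\cap B]$. The commensurability graph $\mathcal{C}(G)$ is the weighted graph whose vertices are all subgroups of $G$, with an edge between $A$ and $B$ if and only if $A\cap B$ has finite index in both $A$ and $B$, this edge having weight $c(A,B)$. The length of a path is the product of its edge weights; the distance between two vertices is the minimal length of a path joining them, and a geodesic is a path whose length equals the distance between its endpoints. *)

theory Defs
  imports "HOL-Algebra.Coset"
begin

definition fin_index :: "('a, 'b) monoid_scheme \<Rightarrow> 'a set \<Rightarrow> 'a set \<Rightarrow> bool" where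
  "fin_index G H A \<longleftrightarrow> finite {H #>\<^bsub>G\<^esub> a | a. a \<in> A}"

definition rindex :: "('a, 'b) monoid_scheme \<Rightarrow> 'a set \<Rightarrow> 'a set \<Rightarrow> nat" where
  "rindex G H A = card {H #>\<^bsub>G\<^esub> a | a. a \<in> A}"

definition commens :: "('a, 'b) monoid_scheme \<Rightarrow> 'a set \<Rightarrow> 'a set \<Rightarrow> bool" where
  "commens G A B \<longleftrightarrow> subgroup A G \<and> subgroup B G
     \<and> fin_index G (A \<inter> B) A \<and> fin_index G (A \<inter> B) B"

definition cweight :: "('a, 'b) monoid_scheme \<Rightarrow> 'a set \<Rightarrow> 'a set \<Rightarrow> nat" where
  "cweight G A B = rindex G (A \<inter> B) A * rindex G (A \<inter> B) B"

definition cpath :: "('a, 'b) monoid_scheme \<Rightarrow> 'a set list \<Rightarrow> bool" where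
  "cpath G p \<longleftrightarrow> p \<noteq> [] \<and> (\<forall>H\<in>set p. subgroup H G)
     \<and> (\<forall>i. Suc i < length p \<longrightarrow> commens G (p ! i) (p ! Suc i))"

definition plength :: "('a, 'b) monoid_scheme \<Rightarrow> 'a set list \<Rightarrow> nat" where
  "plength G p = (\<Prod>i<length p - 1. cweight G (p ! i) (p ! Suc i))"

definition cdist :: "('a, 'b) monoid_scheme \<Rightarrow> 'a set \<Rightarrow> 'a set \<Rightarrow> nat" where
  "cdist G A B = (LEAST l. \<exists>p. cpath G p \<and> hd p = A \<and> last p = B \<and> plength G p = l)"

definition geodesic :: "('a, 'b) monoid_scheme \<Rightarrow> 'a set list \<Rightarrow> bool" where
  "geodesic G p \<longleftrightarrow> cpath G p \<and> plength G p = cdist G (hd p) (last p)"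

end

theory Submission
  imports Defs
begin

(* The weight c satisfies the multiplicative triangle inequality c(A,C) <= c(A,B) c(B,C).
   Indeed, for D = A \<inter> B \<inter> C the tower law gives [A : D] = [A : A \<inter> B] [A \<inter> B : D],
   and the cosets of D in A \<inter> B embed into those of B \<inter> C in B; since D is contained in
   A \<inter> C this bounds [A : A \<inter> C], and symmetrically [C : A \<inter> C]. Hence every path from
   A to C has length at least c(A,C). Along an ascending chain H_1 \<subseteq> ... \<subseteq> H_n the weight
   of each edge is the index [H_(i+1) : H_i], and by the tower law these multiply to
   [H_n : H_1] = c(H_1,H_n), so the chain attains the lower bound. *)

definition rcosets_in :: "('a, 'b) monoid_scheme \<Rightarrow> 'a set \<Rightarrow> 'a set \<Rightarrow> 'a set set" where
  "rcosets_in G H A = {H #>\<^bsub>G\<^esub> a | a. a \<in> A}"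

lemma fin_index_iff_finite_rcosets_in: "fin_index G H A \<longleftrightarrow> finite (rcosets_in G H A)"
  by (simp add: fin_index_def rcosets_in_def)

lemma rindex_eq_card_rcosets_in: "rindex G H A = card (rcosets_in G H A)"
  by (simp add: rindex_def rcosets_in_def)

context group begin

lemma rcos_eq_rcos_iff:
  assumes "subgroup H G" "a \<in> carrier G" "b \<in> carrier G"
  shows "H #> a = H #> b \<longleftrightarrow> a \<otimes> inv b \<in> H"
  using assms repr_independence rcos_self subgroup.rcos_module[OF assms(1) is_group]
  by metis

lemma rcosets_in_self: "subgroup A G \<Longrightarrow> rcosets_in G A A = {A}"
  unfolding rcosets_in_def using subgroup.rcos_const[OF _ is_group] subgroup.one_closed by blast

lemma set_mult_rcos_supergroup:
  assumes "subgroup K G" "subgroup V G" "K \<subseteq> V" "x \<in> carrier G"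
  shows "V <#> (K #> x) = V #> x"
  using setmult_rcos_assoc set_mult_subgroup_idem[OF assms(2) subgroup_incl[OF assms(1-3)]]
    assms subgroup.subset by metis

lemma rcosets_in_supergroup:
  assumes "subgroup K G" "subgroup V G" "K \<subseteq> V" "A \<subseteq> carrier G"
  shows "rcosets_in G V A = (<#>) V ` rcosets_in G K A"
  using set_mult_rcos_supergroup[OF assms(1-3)] assms(4) unfolding rcosets_in_def by auto

lemma fin_index_supergroup:
  assumes "subgroup K G" "subgroup V G" "K \<subseteq> V" "A \<subseteq> carrier G" "fin_index G K A"
  shows "fin_index G V A"
  using assms rcosets_in_supergroup[OF assms(1-4)] by (simp add: fin_index_iff_finite_rcosets_in)

lemma rindex_supergroup_le:
  assumes "subgroup K G" "subgroup V G" "K \<subseteq> V" "A \<subseteq> carrier G" "fin_index G K A"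
  shows "rindex G V A \<le> rindex G K A"
  using assms rcosets_in_supergroup[OF assms(1-4)]
  by (simp add: fin_index_iff_finite_rcosets_in rindex_eq_card_rcosets_in card_image_le)

lemma set_mult_embeds_rcosets_in_Int:
  assumes U: "subgroup U G" and V: "subgroup V G" and "U \<subseteq> W" "W \<subseteq> carrier G"
  shows "inj_on ((<#>) V) (rcosets_in G (U \<inter> V) U)"
    and "(<#>) V ` rcosets_in G (U \<inter> V) U \<subseteq> rcosets_in G V W"
proof -
  have UV: "subgroup (U \<inter> V) G" using U V by (rule subgroups_Inter_pair)
  have lift: "V <#> ((U \<inter> V) #> a) = V #> a" if "a \<in> U" for a
    using set_mult_rcos_supergroup[OF UV V] that subgroup.subset[OF U] by blast
  show "(<#>) V ` rcosets_in G (U \<inter> V) U \<subseteq> rcosets_in G V W"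
    using lift assms(3) unfolding rcosets_in_def by auto
  show "inj_on ((<#>) V) (rcosets_in G (U \<inter> V) U)"
  proof (rule inj_onI, clarsimp simp: rcosets_in_def)
    fix a b assume a: "a \<in> U" and b: "b \<in> U"
      and eq: "V <#> ((U \<inter> V) #> a) = V <#> ((U \<inter> V) #> b)"
    have ab: "a \<in> carrier G" "b \<in> carrier G" using a b subgroup.subset[OF U] by auto
    have "a \<otimes> inv b \<in> V" using eq lift[OF a] lift[OF b] rcos_eq_rcos_iff[OF V ab] by simp
    moreover have "a \<otimes> inv b \<in> U" using a b U by (simp add: subgroup.m_closed subgroup.m_inv_closed)
    ultimately show "(U \<inter> V) #> a = (U \<inter> V) #> b" using rcos_eq_rcos_iff[OF UV ab] by simp
  qed
qed

lemma fin_index_Int: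
  assumes "subgroup U G" "subgroup V G" "U \<subseteq> W" "W \<subseteq> carrier G" "fin_index G V W"
  shows "fin_index G (U \<inter> V) U"
  using assms set_mult_embeds_rcosets_in_Int[OF assms(1-4)]
  by (metis fin_index_iff_finite_rcosets_in finite_imageD finite_subset)

lemma rindex_Int_le:
  assumes "subgroup U G" "subgroup V G" "U \<subseteq> W" "W \<subseteq> carrier G" "fin_index G V W"
  shows "rindex G (U \<inter> V) U \<le> rindex G V W"
  using assms set_mult_embeds_rcosets_in_Int[OF assms(1-4)]
  by (metis fin_index_iff_finite_rcosets_in rindex_eq_card_rcosets_in card_inj_on_le)

lemma inj_on_rcos_translate:
  assumes "b \<in> carrier G"
  shows "inj_on (\<lambda>T. T #> b) (Pow (carrier G))"
proof (rule inj_onI)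
  fix S T assume "S \<in> Pow (carrier G)" "T \<in> Pow (carrier G)" "S #> b = T #> b"
  then show "S = T"
    using arg_cong[of _ _ "\<lambda>X. X #> inv b"] coset_mult_assoc assms by (metis PowD coset_mult_one inv_closed r_inv)
qed

lemma rcosets_in_fibre:
  assumes H: "subgroup H G" and K: "subgroup K G" and M: "subgroup M G"
    and HK: "H \<subseteq> K" and KM: "K \<subseteq> M" and b: "b \<in> M"
  shows "{S \<in> rcosets_in G H M. K <#> S = K #> b} = (\<lambda>T. T #> b) ` rcosets_in G H K"
proof -
  have MG: "M \<subseteq> carrier G" and bG: "b \<in> carrier G" using b subgroup.subset[OF M] by auto
  have fibre_iff: "K <#> (H #> a) = K #> b \<longleftrightarrow> a \<otimes> inv b \<in> K" if "a \<in> M" for a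
    using set_mult_rcos_supergroup[OF H K HK] rcos_eq_rcos_iff[OF K _ bG] that MG by auto
  have "{S \<in> rcosets_in G H M. K <#> S = K #> b} = {H #> a | a. a \<in> M \<and> a \<otimes> inv b \<in> K}"
    using fibre_iff unfolding rcosets_in_def by blast
  also have "\<dots> = {H #> (k \<otimes> b) | k. k \<in> K}"
  proof (intro equalityI subsetI; clarify)
    fix a assume "a \<in> M" "a \<otimes> inv b \<in> K"
    moreover have "a = (a \<otimes> inv b) \<otimes> b" using \<open>a \<in> M\<close> MG bG by (simp add: m_assoc subsetD)
    ultimately show "\<exists>k. H #> a = H #> (k \<otimes> b) \<and> k \<in> K" by metis
  next
    fix k assume "k \<in> K"
    then have "k \<otimes> b \<in> M" and "k \<otimes> b \<otimes> inv b = k"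
      using KM b subgroup.m_closed[OF M] subgroup.subset[OF K] bG by (auto simp: m_assoc)
    then show "\<exists>a. H #> (k \<otimes> b) = H #> a \<and> a \<in> M \<and> a \<otimes> inv b \<in> K"
      using \<open>k \<in> K\<close> by metis
  qed
  also have "\<dots> = (\<lambda>T. T #> b) ` rcosets_in G H K"
    using coset_mult_assoc[OF subgroup.subset[OF H] _ bG] subgroup.subset[OF K]
    unfolding rcosets_in_def by blast
  finally show ?thesis .
qed

lemma rcosets_in_subset_Pow:
  "H \<subseteq> carrier G \<Longrightarrow> A \<subseteq> carrier G \<Longrightarrow> rcosets_in G H A \<subseteq> Pow (carrier G)"
  unfolding rcosets_in_def using r_coset_subset_G by blast

lemma rindex_tower:
  assumes H: "subgroup H G" and K: "subgroup K G" and M: "subgroup M G"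
    and HK: "H \<subseteq> K" and KM: "K \<subseteq> M" and fin_KM: "fin_index G K M" and fin_HK: "fin_index G H K"
  shows "fin_index G H M" and "rindex G H M = rindex G K M * rindex G H K"
proof -
  \<comment> \<open>Group the cosets of H in M by the coset of K containing them;
      each group is a translate of the cosets of H in K.\<close>
  define fibre where "fibre B = {S \<in> rcosets_in G H M. K <#> S = B}" for B
  have MG: "M \<subseteq> carrier G" using subgroup.subset[OF M] .
  have partition: "rcosets_in G H M = (\<Union>B \<in> rcosets_in G K M. fibre B)"
    using set_mult_rcos_supergroup[OF H K HK] MG unfolding fibre_def rcosets_in_def by blast
  have fibre: "finite (fibre B) \<and> card (fibre B) = rindex G H K" if B: "B \<in> rcosets_in G K M" for B
  proof -
    obtain b where b: "b \<in> M" "B = K #> b" using B unfolding rcosets_in_def by blast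
    have "inj_on (\<lambda>T. T #> b) (rcosets_in G H K)"
      using inj_on_rcos_translate rcosets_in_subset_Pow subgroup.subset[OF H] subgroup.subset[OF K] b MG
      by (meson inj_on_subset subsetD)
    then show ?thesis
      using rcosets_in_fibre[OF H K M HK KM b(1)] fin_HK b(2) unfolding fibre_def
      by (simp add: fin_index_iff_finite_rcosets_in rindex_eq_card_rcosets_in card_image)
  qed
  show "fin_index G H M"
    using partition fibre fin_KM by (simp add: fin_index_iff_finite_rcosets_in)
  have "card (rcosets_in G H M) = (\<Sum>B \<in> rcosets_in G K M. card (fibre B))"
    unfolding partition using fin_KM fibre
    by (intro card_UN_disjoint) (auto simp: fibre_def fin_index_iff_finite_rcosets_in)
  then show "rindex G H M = rindex G K M * rindex G H K"
    using fibre by (simp add: rindex_eq_card_rcosets_in)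
qed

lemma rindex_Int_triangle:
  assumes A: "subgroup A G" and B: "subgroup B G" and C: "subgroup C G"
    and fin_AB: "fin_index G (A \<inter> B) A" and fin_BC: "fin_index G (B \<inter> C) B"
  shows "fin_index G (A \<inter> C) A"
    and "rindex G (A \<inter> C) A \<le> rindex G (A \<inter> B) A * rindex G (B \<inter> C) B"
proof -
  let ?D = "(A \<inter> B) \<inter> (B \<inter> C)"
  have AB: "subgroup (A \<inter> B) G" and BC: "subgroup (B \<inter> C) G" and AC: "subgroup (A \<inter> C) G"
    using A B C by (simp_all add: subgroups_Inter_pair)
  have D: "subgroup ?D G" using AB BC by (rule subgroups_Inter_pair)
  have BG: "B \<subseteq> carrier G" and AG: "A \<subseteq> carrier G" using A B subgroup.subset by auto
  have fin_D: "fin_index G ?D (A \<inter> B)" and le_D: "rindex G ?D (A \<inter> B) \<le> rindex G (B \<inter> C) B"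
    using fin_index_Int[OF AB BC _ BG fin_BC] rindex_Int_le[OF AB BC _ BG fin_BC] by auto
  have "fin_index G ?D A" and "rindex G ?D A = rindex G (A \<inter> B) A * rindex G ?D (A \<inter> B)"
    using rindex_tower[OF D AB A _ _ fin_AB fin_D] by auto
  moreover have "?D \<subseteq> A \<inter> C" by blast
  ultimately show "fin_index G (A \<inter> C) A"
    and "rindex G (A \<inter> C) A \<le> rindex G (A \<inter> B) A * rindex G (B \<inter> C) B"
    using fin_index_supergroup[OF D AC _ AG] rindex_supergroup_le[OF D AC _ AG] le_D
    by (auto intro: order.trans)
qed

end

lemma commens_refl: "group G \<Longrightarrow> subgroup A G \<Longrightarrow> commens G A A"
  by (simp add: commens_def fin_index_iff_finite_rcosets_in group.rcosets_in_self)

lemma cweight_refl: "group G \<Longrightarrow> subgroup A G \<Longrightarrow> cweight G A A = 1"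
  by (simp add: cweight_def rindex_eq_card_rcosets_in group.rcosets_in_self)

lemma commens_trans:
  assumes "group G" "commens G A B" "commens G B C"
  shows "commens G A C"
  using assms group.rindex_Int_triangle(1)[OF assms(1), of A B C] group.rindex_Int_triangle(1)[OF assms(1), of C B A]
  unfolding commens_def by (simp add: Int_commute)

lemma cweight_triangle:
  assumes "group G" "commens G A B" "commens G B C"
  shows "cweight G A C \<le> cweight G A B * cweight G B C"
proof -
  have "rindex G (A \<inter> C) A \<le> rindex G (A \<inter> B) A * rindex G (B \<inter> C) B"
    and "rindex G (A \<inter> C) C \<le> rindex G (B \<inter> C) C * rindex G (A \<inter> B) B"
    using group.rindex_Int_triangle(2)[OF assms(1), of A B C] group.rindex_Int_triangle(2)[OF assms(1), of C B A]
      assms(2,3) unfolding commens_def by (simp_all add: Int_commute)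
  from mult_le_mono[OF this] show ?thesis unfolding cweight_def by (simp add: ac_simps)
qed

lemma cweight_eq_rindex_subset:
  "group G \<Longrightarrow> subgroup A G \<Longrightarrow> A \<subseteq> B \<Longrightarrow> cweight G A B = rindex G A B"
  by (simp add: cweight_def rindex_eq_card_rcosets_in group.rcosets_in_self Int_absorb2)

lemma successively_iff_nth:
  "successively P xs \<longleftrightarrow> (\<forall>i. Suc i < length xs \<longrightarrow> P (xs ! i) (xs ! Suc i))"
proof (induction xs rule: induct_list012)
  case (3 x y zs)
  then show ?case by (auto simp: All_less_Suc2 simp del: successively.simps(2)) 
qed simp_all

lemma successively_hd_last:
  "transp P \<Longrightarrow> reflp P \<Longrightarrow> successively P xs \<Longrightarrow> xs \<noteq> [] \<Longrightarrow> P (hd xs) (last xs)"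
  by (induction xs rule: induct_list012) (auto dest: transpD reflpD)

lemma cpath_iff_successively:
  "cpath G p \<longleftrightarrow> p \<noteq> [] \<and> (\<forall>H\<in>set p. subgroup H G) \<and> successively (commens G) p"
  unfolding cpath_def successively_iff_nth by blast

lemma cpath_Cons_Cons: "cpath G (x # y # r) \<longleftrightarrow> commens G x y \<and> cpath G (y # r)"
  by (auto simp: cpath_iff_successively commens_def)

lemma plength_singleton: "plength G [x] = 1"
  by (simp add: plength_def)

lemma plength_Cons_Cons: "plength G (x # y # r) = cweight G x y * plength G (y # r)"
  unfolding plength_def by (simp del: prod.lessThan_Suc add: prod.lessThan_Suc_shift)

lemma geodesicI:
  assumes "cpath G p"
    and "\<And>q. cpath G q \<Longrightarrow> hd q = hd p \<Longrightarrow> last q = last p \<Longrightarrow> plength G p \<le> plength G q"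
  shows "geodesic G p"
  unfolding geodesic_def cdist_def using assms by (auto intro!: Least_equality[symmetric])

lemma cpath_commens_hd_last:
  assumes "group G"
  shows "cpath G q \<Longrightarrow> commens G (hd q) (last q)"
proof (induction q rule: induct_list012)
  case (2 x)
  then show ?case using commens_refl[OF assms] by (simp add: cpath_def)
next
  case (3 x y zs)
  then have xy: "commens G x y" and yl: "cpath G (y # zs)" by (simp_all add: cpath_Cons_Cons)
  then show ?case using commens_trans[OF assms xy] "3.IH"(2)[OF yl] by simp
qed (simp add: cpath_def)

lemma cweight_le_plength:
  assumes "group G"
  shows "cpath G q \<Longrightarrow> cweight G (hd q) (last q) \<le> plength G q"
proof (induction q rule: induct_list012)
  case (2 x)
  then show ?case using cweight_refl[OF assms] by (simp add: cpath_def plength_singleton)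
next
  case (3 x y zs)
  then have xy: "commens G x y" and yl: "cpath G (y # zs)" by (simp_all add: cpath_Cons_Cons)
  have "cweight G x (last (y # zs)) \<le> cweight G x y * cweight G y (last (y # zs))"
    using cweight_triangle[OF assms xy] cpath_commens_hd_last[OF assms yl] by simp
  also have "\<dots> \<le> cweight G x y * plength G (y # zs)"
    using "3.IH"(2)[OF yl] by simp
  finally show ?case by (simp add: plength_Cons_Cons)
qed (simp add: cpath_def)

lemma plength_ascending_cpath:
  assumes "group G"
  shows "cpath G q \<Longrightarrow> successively (\<subseteq>) q \<Longrightarrow> plength G q = rindex G (hd q) (last q)"
proof (induction q rule: induct_list012)
  case (2 x)
  then show ?case
    by (simp add: cpath_def plength_singleton rindex_eq_card_rcosets_in group.rcosets_in_self[OF assms])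
next
  case (3 x y zs)
  let ?l = "last (y # zs)"
  have xy: "commens G x y" "x \<subseteq> y" and yl: "cpath G (y # zs)" "successively (\<subseteq>) (y # zs)"
    using "3.prems" by (simp_all add: cpath_Cons_Cons)
  have "y \<subseteq> ?l" using successively_hd_last[OF _ _ yl(2)] by (simp add: transp_def reflp_def)
  moreover have "commens G y ?l" using cpath_commens_hd_last[OF assms yl(1)] by simp
  ultimately have "rindex G x ?l = rindex G y ?l * rindex G x y"
    using group.rindex_tower(2)[OF assms, of x y ?l] xy unfolding commens_def by (simp add: Int_absorb1 Int_absorb2)
  moreover have "cweight G x y = rindex G x y"
    using cweight_eq_rindex_subset[OF assms] xy unfolding commens_def by blast
  ultimately show ?case using "3.IH"(2)[OF yl] by (simp add: plength_Cons_Cons)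
qed (simp add: cpath_def)

theorem corollary8:
  fixes G :: "('a, 'b) monoid_scheme" and p :: "'a set list"
  assumes "group G"
    and "cpath G p"
    and "\<forall>i. Suc i < length p \<longrightarrow> p ! i \<subseteq> p ! Suc i"
  shows "geodesic G p"
proof (rule geodesicI[OF assms(2)])
  have ascending: "successively (\<subseteq>) p" using assms(3) by (simp add: successively_iff_nth)
  have "hd p \<subseteq> last p" and "subgroup (hd p) G"
    using successively_hd_last[OF _ _ ascending] assms(2) by (simp_all add: transp_def reflp_def cpath_def)
  then have length_p: "plength G p = cweight G (hd p) (last p)"
    using plength_ascending_cpath[OF assms(1,2) ascending] cweight_eq_rindex_subset[OF assms(1)] by simp
  fix q assume "cpath G q" "hd q = hd p" "last q = last p"
  then show "plength G p \<le> plength G q" using cweight_le_plength[OF assms(1), of q] length_p by simp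
qed

end
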